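(* Let $\psi\in[0,2\pi)$ and consider, for $\kappa\in\mathbb{R}$, the equation $$\cos(\kappa\cos\psi)+\cos\!\Big(\tfrac{\kappa}{2}\cos\psi+\tfrac{\sqrt3\kappa}{2}\sin\psi\Big)+\cos\!\Big(\tfrac{\kappa}{2}\cos\psi-\tfrac{\sqrt3\kappa}{2}\sin\psi\Big)-3=0. \qquad (\ast\ast)$$ Then $(\ast\ast)$ has a real solution $\kappa\neq0$ if and only if $(\sqrt3\tan\psi-1)/2\in\mathbb{Q}_\infty$. In that case one can write $$\cos\psi=\frac{\sqrt3}{2}\frac{m_1}{\sqrt{m_1^2+m_1m_2+m_2^2}},\qquad \sin\psi=\frac12\frac{m_1+2m_2}{\sqrt{m_1^2+m_1m_2+m_2^2}}$$ with $(m_1,m_2)\in\mathbb{Z}^2\setminus\{(0,0)\}$, $\gcd(|m_1|,|m_2|)=1$, and the set of real solutions of $(\ast\ast)$ is exactly $$\Big\{\tfrac{4M\pi}{\sqrt3}\sqrt{m_1^2+m_1m_2+m_2^2} : M\in\mathbb{Z}\Big\}.$$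
   Context: $\mathbb{Q}_\infty := \mathbb{Q}\cup\{\pm\infty\}$, with the conventions $\tan(\pm\pi/2)=\pm\infty$ and $(\sqrt3\cdot(\pm\infty)-1)/2=\pm\infty$. *)

theory Defs
  imports Complex_Main
begin

definition eqnF :: "real \<Rightarrow> real \<Rightarrow> real" where
  "eqnF \<psi> \<kappa> =
     cos (\<kappa> * cos \<psi>)
   + cos (\<kappa> / 2 * cos \<psi> + sqrt 3 * \<kappa> / 2 * sin \<psi>)
   + cos (\<kappa> / 2 * cos \<psi> - sqrt 3 * \<kappa> / 2 * sin \<psi>) - 3"

text \<open>The condition (sqrt 3 tan psi - 1)/2 in Q_infty = Q with plus/minus infinity, with the
  conventions tan(+-pi/2) = +-infinity and (sqrt 3 (+-infinity) - 1)/2 = +-infinity.\<close>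
definition in_Q_infty_cond :: "real \<Rightarrow> bool" where
  "in_Q_infty_cond \<psi> \<longleftrightarrow> cos \<psi> = 0 \<or> (sqrt 3 * tan \<psi> - 1) / 2 \<in> \<rat>"

end

theory Submission
  imports Defs
begin

text \<open>
  Writing \<open>a = \<kappa> cos \<psi>\<close> and \<open>b = \<kappa>/2 cos \<psi> + \<surd>3\<kappa>/2 sin \<psi>\<close>, the third
  argument of equation (**) is \<open>a - b\<close>; since each cosine is at most 1, (**) holds iff
  \<open>a\<close> and \<open>b\<close> both lie in \<open>2\<pi>\<int>\<close>.  For a nonzero solution the quotient \<open>b/a\<close> is then
  rational (or \<open>cos \<psi> = 0\<close>), and \<open>b/a - 1 = (\<surd>3 tan \<psi> - 1)/2\<close>.  Conversely, if this
  slope is rational it equals \<open>m2/m1\<close> in lowest terms, and normalising the vector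
  \<open>(\<surd>3 m1, m1 + 2 m2)\<close> recovers \<open>(cos \<psi>, sin \<psi>)\<close> with the norm
  \<open>2 \<surd>(m1\<^sup>2 + m1 m2 + m2\<^sup>2)\<close>.  With this parametrisation \<open>a/(2\<pi>) = t m1\<close> and
  \<open>b/(2\<pi>) = t (m1 + m2)\<close> for \<open>t = \<surd>3 \<kappa> / (4\<pi> \<surd>N)\<close>, and by Bezout (the two
  coefficients are coprime) both are integers iff \<open>t\<close> is; this is the stated lattice.
\<close>

lemma cos_eq_1_iff_Ints: "cos x = 1 \<longleftrightarrow> x / (2 * pi) \<in> \<int>"
proof -
  have "(\<exists>n::int. x = n * 2 * pi) \<longleftrightarrow> (\<exists>n::int. x / (2 * pi) = n)"
    using pi_gt_zero by (auto simp: field_simps)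
  then show ?thesis by (auto simp: cos_one_2pi_int Ints_def)
qed

text \<open>A sum of three cosines reaches its maximum 3 only if each term equals 1;
  for the arguments \<open>a, b, a - b\<close> this means \<open>a, b \<in> 2\<pi>\<int>\<close>.\<close>
lemma cos_triple_sum_eq_3_iff:
  "cos a + cos b + cos (a - b) = 3 \<longleftrightarrow> a / (2 * pi) \<in> \<int> \<and> b / (2 * pi) \<in> \<int>"
proof
  assume "cos a + cos b + cos (a - b) = 3"
  moreover have "cos a \<le> 1" "cos b \<le> 1" "cos (a - b) \<le> 1" by auto
  ultimately have "cos a = 1" "cos b = 1" by linarith+
  then show "a / (2 * pi) \<in> \<int> \<and> b / (2 * pi) \<in> \<int>" by (simp add: cos_eq_1_iff_Ints)
next
  assume ab: "a / (2 * pi) \<in> \<int> \<and> b / (2 * pi) \<in> \<int>"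
  then have "(a - b) / (2 * pi) \<in> \<int>" by (simp add: diff_divide_distrib)
  with ab have "cos a = 1" "cos b = 1" "cos (a - b) = 1" by (simp_all add: cos_eq_1_iff_Ints)
  then show "cos a + cos b + cos (a - b) = 3" by simp
qed

lemma eqnF_eq_0_iff:
  "eqnF \<psi> \<kappa> = 0 \<longleftrightarrow> \<kappa> * cos \<psi> / (2 * pi) \<in> \<int>
      \<and> (\<kappa> / 2 * cos \<psi> + sqrt 3 * \<kappa> / 2 * sin \<psi>) / (2 * pi) \<in> \<int>"
proof -
  define a where "a = \<kappa> * cos \<psi>"
  define b where "b = \<kappa> / 2 * cos \<psi> + sqrt 3 * \<kappa> / 2 * sin \<psi>"
  have "\<kappa> / 2 * cos \<psi> - sqrt 3 * \<kappa> / 2 * sin \<psi> = a - b"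
    unfolding a_def b_def by (simp add: algebra_simps)
  then have "eqnF \<psi> \<kappa> = cos a + cos b + cos (a - b) - 3"
    unfolding eqnF_def by (simp add: a_def b_def)
  then show ?thesis
    using cos_triple_sum_eq_3_iff[of a b] by (simp add: a_def b_def)
qed

lemma Ints_of_coprime_multiples:
  fixes t :: "'a :: comm_ring_1" and a b :: int
  assumes "coprime a b" and "t * of_int a \<in> \<int>" and "t * of_int b \<in> \<int>"
  shows "t \<in> \<int>"
proof -
  obtain u v where uv: "u * a + v * b = 1"
    using bezout_int[of a b] assms(1) by (auto simp: coprime_iff_gcd_eq_1)
  have "t = of_int u * (t * of_int a) + of_int v * (t * of_int b)"
  proof -
    have "t = t * of_int (u * a + v * b)" using uv by simp
    also have "\<dots> = of_int u * (t * of_int a) + of_int v * (t * of_int b)"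
      by (simp add: algebra_simps)
    finally show ?thesis .
  qed
  also have "\<dots> \<in> \<int>" by (meson Ints_add Ints_mult Ints_of_int assms(2,3))
  finally show ?thesis .
qed

text \<open>The norm form \<open>m1\<^sup>2 + m1 m2 + m2\<^sup>2\<close> is positive definite, since four times it
  equals \<open>(2 m1 + m2)\<^sup>2 + 3 m2\<^sup>2\<close>.\<close>
lemma norm_form_pos:
  fixes m1 m2 :: int
  assumes "(m1, m2) \<noteq> (0, 0)"
  shows "m1^2 + m1*m2 + m2^2 > 0"
proof -
  have id: "4*(m1^2 + m1*m2 + m2^2) = (2*m1 + m2)^2 + 3*m2^2"
    by (simp add: power2_eq_square algebra_simps)
  have "(2*m1 + m2)^2 + 3*m2^2 > 0"
    using assms by (cases "m2 = 0") (simp_all add: add_nonneg_pos)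
  then show ?thesis using id by simp
qed

text \<open>The solution set of (**) for a direction parametrised by coprime \<open>(m1, m2)\<close>:
  the arguments become \<open>2\<pi> t m1\<close> and \<open>2\<pi> t (m1 + m2)\<close>, and since \<open>m1\<close> and
  \<open>m1 + m2\<close> are coprime both are in \<open>2\<pi>\<int>\<close> iff \<open>t \<in> \<int>\<close>.\<close>
lemma eqnF_solution_set:
  fixes m1 m2 :: int
  defines "N \<equiv> real_of_int (m1^2 + m1*m2 + m2^2)"
  assumes coprime: "gcd m1 m2 = 1"
    and c: "cos \<psi> = sqrt 3 / 2 * of_int m1 / sqrt N"
    and s: "sin \<psi> = 1 / 2 * of_int (m1 + 2*m2) / sqrt N"
  shows "{\<kappa>. eqnF \<psi> \<kappa> = 0} = {4 * of_int M * pi / sqrt 3 * sqrt N | M :: int. True}"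
proof -
  have "(m1, m2) \<noteq> (0, 0)" using coprime by auto
  then have "N > 0" unfolding N_def of_int_0_less_iff by (rule norm_form_pos)
  then have sN: "sqrt N > 0" by simp
  define t where "t \<kappa> = \<kappa> * sqrt 3 / (4 * pi * sqrt N)" for \<kappa>
  have arg1: "\<kappa> * cos \<psi> / (2 * pi) = t \<kappa> * m1" for \<kappa>
    using sN pi_gt_zero unfolding c t_def by (simp add: field_simps)
  have arg2: "(\<kappa> / 2 * cos \<psi> + sqrt 3 * \<kappa> / 2 * sin \<psi>) / (2 * pi) = t \<kappa> * (m1 + m2)"
    for \<kappa> using sN pi_gt_zero unfolding c s t_def by (simp add: field_simps)
  have "coprime m1 (m1 + m2)" using coprime by (simp add: coprime_iff_gcd_eq_1)
  then have solution_iff: "eqnF \<psi> \<kappa> = 0 \<longleftrightarrow> t \<kappa> \<in> \<int>" for \<kappa>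
    unfolding eqnF_eq_0_iff arg1 arg2
    using Ints_of_coprime_multiples[of m1 "m1 + m2" "t \<kappa>"]
    by (auto intro!: Ints_mult simp del: of_int_add)
  have t_inverse: "\<kappa> = 4 * t \<kappa> * pi / sqrt 3 * sqrt N" for \<kappa>
    using sN pi_gt_zero unfolding t_def by (simp add: field_simps)
  have t_lattice: "t (4 * of_int M * pi / sqrt 3 * sqrt N) = of_int M" for M :: int
    using sN pi_gt_zero unfolding t_def by (simp add: field_simps)
  show ?thesis
  proof (intro set_eqI iffI)
    fix \<kappa> assume "\<kappa> \<in> {\<kappa>. eqnF \<psi> \<kappa> = 0}"
    then obtain M :: int where "t \<kappa> = of_int M" by (auto simp: solution_iff elim: Ints_cases)
    then show "\<kappa> \<in> {4 * of_int M * pi / sqrt 3 * sqrt N | M :: int. True}"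
      using t_inverse[of \<kappa>] by auto
  next
    fix \<kappa> assume "\<kappa> \<in> {4 * of_int M * pi / sqrt 3 * sqrt N | M :: int. True}"
    then obtain M :: int where "\<kappa> = 4 * of_int M * pi / sqrt 3 * sqrt N" by blast
    then have "t \<kappa> = of_int M" by (simp only: t_lattice)
    then show "\<kappa> \<in> {\<kappa>. eqnF \<psi> \<kappa> = 0}" by (simp add: solution_iff)
  qed
qed

text \<open>A unit vector \<open>(c, s)\<close> of slope \<open>s/c = (m1 + 2 m2)/(\<surd>3 m1)\<close>, oriented like
  \<open>m1\<close>, is the normalisation of \<open>(\<surd>3 m1, m1 + 2 m2)\<close>, whose length is \<open>2\<surd>N\<close>.\<close>
lemma unit_vector_of_slope:
  fixes c s :: real and m1 m2 :: int
  defines "N \<equiv> real_of_int (m1^2 + m1*m2 + m2^2)"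
  assumes unit: "c^2 + s^2 = 1" and orient: "0 < c * m1"
    and slope: "sqrt 3 * s * m1 = c * (m1 + 2 * m2)"
  shows "c = sqrt 3 / 2 * of_int m1 / sqrt N \<and> s = 1 / 2 * of_int (m1 + 2*m2) / sqrt N"
proof -
  have m1: "m1 \<noteq> 0" using orient by auto
  then have Np: "N > 0" unfolding N_def of_int_0_less_iff using norm_form_pos by simp
  define d where "d = sqrt 3 / 2 * of_int m1 / sqrt N"
  have c_sq: "c^2 * (4 * N) = 3 * m1^2"
  proof -
    have "3 * m1^2 = 3 * m1^2 * (c^2 + s^2)" using unit by simp
    also have "\<dots> = 3 * m1^2 * c^2 + (sqrt 3 * s * m1)^2"
      by (simp add: algebra_simps)
    also have "\<dots> = c^2 * (4 * N)"
      unfolding slope N_def by (simp add: power2_eq_square algebra_simps)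
    finally show ?thesis by simp
  qed
  have "d^2 = 3 * m1^2 / (4 * N)"
    unfolding d_def using Np by (simp add: power_divide power_mult_distrib)
  also have "\<dots> = c^2" using Np c_sq by (simp add: field_simps)
  finally have "c = d \<or> c = - d" by (auto simp: power2_eq_iff)
  moreover have "0 < d * m1"
  proof -
    have "d * m1 = sqrt 3 / 2 * m1^2 / sqrt N" unfolding d_def by (simp add: power2_eq_square)
    then show ?thesis using m1 Np by simp
  qed
  ultimately have cd: "c = d" using orient by auto
  have "sqrt 3 * m1 * s = sqrt 3 * m1 * (1 / 2 * of_int (m1 + 2*m2) / sqrt N)"
    using slope unfolding cd d_def by (simp add: field_simps)
  moreover have "sqrt 3 * real_of_int m1 \<noteq> 0" using m1 by simp
  ultimately have "s = 1 / 2 * of_int (m1 + 2*m2) / sqrt N" by (metis mult_left_cancel)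
  with cd show ?thesis unfolding d_def by simp
qed

text \<open>Under the rationality condition the direction \<open>\<psi>\<close> admits the parametrisation by
  coprime integers: \<open>(0, +1 or -1)\<close> if \<open>cos \<psi> = 0\<close>, otherwise \<open>m2/m1\<close> is the reduced
  form of \<open>(\<surd>3 tan \<psi> - 1)/2\<close> with \<open>m1\<close> taking the sign of \<open>cos \<psi>\<close>.\<close>
lemma direction_parametrisation:
  assumes "in_Q_infty_cond \<psi>"
  obtains m1 m2 :: int where "gcd m1 m2 = 1"
    and "cos \<psi> = sqrt 3 / 2 * of_int m1 / sqrt (of_int (m1^2 + m1*m2 + m2^2))"
    and "sin \<psi> = 1 / 2 * of_int (m1 + 2*m2) / sqrt (of_int (m1^2 + m1*m2 + m2^2))"
proof (cases "cos \<psi> = 0")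
  case True
  then have "sin \<psi> ^ 2 = 1" using sin_cos_squared_add[of \<psi>] by simp
  then have "sin \<psi> = 1 \<or> sin \<psi> = -1" by (simp add: power2_eq_1_iff)
  then show ?thesis using True that[of 0 1] that[of 0 "-1"] by auto
next
  case False
  with assms have "(sqrt 3 * tan \<psi> - 1) / 2 \<in> \<rat>" unfolding in_Q_infty_cond_def by simp
  then obtain a b :: int where b: "b > 0" and ab: "coprime a b"
    and slope_ab: "(sqrt 3 * tan \<psi> - 1) / 2 = of_int a / of_int b"
    by (rule Rats_cases')
  define \<sigma> :: int where "\<sigma> = (if cos \<psi> > 0 then 1 else -1)"
  have \<sigma>: "\<sigma> * \<sigma> = 1" "0 < cos \<psi> * \<sigma>"
    using False unfolding \<sigma>_def by auto
  define m1 m2 where "m1 = \<sigma> * b" and "m2 = \<sigma> * a"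
  have "\<sigma> = 1 \<or> \<sigma> = -1" unfolding \<sigma>_def by auto
  then have "gcd m1 m2 = gcd b a" unfolding m1_def m2_def by auto
  then have "gcd m1 m2 = 1" using ab by (simp add: coprime_iff_gcd_eq_1 gcd.commute)
  moreover have "0 < cos \<psi> * m1"
  proof -
    have "cos \<psi> * m1 = (cos \<psi> * \<sigma>) * b" unfolding m1_def by simp
    then show ?thesis using \<sigma>(2) b by (simp only:) (rule mult_pos_pos; simp)
  qed
  moreover have "sqrt 3 * sin \<psi> * m1 = cos \<psi> * (m1 + 2 * m2)"
  proof -
    have "of_int a / of_int b = real_of_int m2 / real_of_int m1"
      using \<sigma>(1) b unfolding m1_def m2_def by (auto simp: field_simps)
    with slope_ab False b \<sigma>(1) show ?thesis
      unfolding m1_def m2_def tan_def by (auto simp: field_simps)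
  qed
  ultimately show ?thesis
    using unit_vector_of_slope[of "cos \<psi>" "sin \<psi>" m1 m2] that by simp
qed

text \<open>Necessity: a nonzero solution makes \<open>b/a\<close> a quotient of integers, and
  \<open>b/a - 1 = (\<surd>3 tan \<psi> - 1)/2\<close> whenever \<open>cos \<psi> \<noteq> 0\<close>.\<close>
lemma nonzero_solution_imp_Q_infty:
  assumes "\<kappa> \<noteq> 0" and "eqnF \<psi> \<kappa> = 0"
  shows "in_Q_infty_cond \<psi>"
proof (cases "cos \<psi> = 0")
  case False
  define a where "a = \<kappa> * cos \<psi> / (2 * pi)"
  define b where "b = (\<kappa> / 2 * cos \<psi> + sqrt 3 * \<kappa> / 2 * sin \<psi>) / (2 * pi)"
  have "a \<in> \<int>" "b \<in> \<int>" using assms(2) unfolding eqnF_eq_0_iff a_def b_def by auto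
  then have "b / a - 1 \<in> \<rat>" by (auto elim!: Ints_cases)
  moreover have "b / a - 1 = (sqrt 3 * tan \<psi> - 1) / 2"
    using assms(1) False pi_gt_zero unfolding a_def b_def tan_def by (simp add: field_simps)
  ultimately show ?thesis unfolding in_Q_infty_cond_def by simp
qed (simp add: in_Q_infty_cond_def)

lemma Q_infty_imp_solution_lattice:
  assumes "in_Q_infty_cond \<psi>"
  obtains m1 m2 :: int where "(m1, m2) \<noteq> (0, 0)" and "gcd \<bar>m1\<bar> \<bar>m2\<bar> = 1"
    and "cos \<psi> = sqrt 3 / 2 * of_int m1 / sqrt (of_int (m1^2 + m1*m2 + m2^2))"
    and "sin \<psi> = 1 / 2 * of_int (m1 + 2*m2) / sqrt (of_int (m1^2 + m1*m2 + m2^2))"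
    and "{\<kappa>. eqnF \<psi> \<kappa> = 0}
           = {4 * of_int M * pi / sqrt 3 * sqrt (of_int (m1^2 + m1*m2 + m2^2)) | M :: int. True}"
proof -
  obtain m1 m2 :: int where m: "gcd m1 m2 = 1"
    "cos \<psi> = sqrt 3 / 2 * of_int m1 / sqrt (of_int (m1^2 + m1*m2 + m2^2))"
    "sin \<psi> = 1 / 2 * of_int (m1 + 2*m2) / sqrt (of_int (m1^2 + m1*m2 + m2^2))"
    using direction_parametrisation[OF assms] by blast
  have "(m1, m2) \<noteq> (0, 0)" using m(1) by auto
  moreover have "gcd \<bar>m1\<bar> \<bar>m2\<bar> = 1" using m(1) by simp
  ultimately show ?thesis using m(2,3) eqnF_solution_set[OF m] by (rule that)
qed

lemma solution_lattice_nonzero_point: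
  fixes m1 m2 :: int
  assumes "(m1, m2) \<noteq> (0, 0)"
  shows "\<exists>\<kappa>::real. \<kappa> \<noteq> 0
           \<and> \<kappa> \<in> {4 * of_int M * pi / sqrt 3 * sqrt (of_int (m1^2 + m1*m2 + m2^2)) | M :: int. True}"
proof -
  have "real_of_int (m1^2 + m1*m2 + m2^2) > 0"
    unfolding of_int_0_less_iff using assms by (rule norm_form_pos)
  then have "4 * of_int (1::int) * pi / sqrt 3 * sqrt (of_int (m1^2 + m1*m2 + m2^2)) \<noteq> (0::real)"
    by simp
  then show ?thesis by blast
qed

theorem mainTheorem6:
  fixes \<psi> :: real
  assumes "0 \<le> \<psi>" and "\<psi> < 2 * pi"
  shows "((\<exists>\<kappa>::real. \<kappa> \<noteq> 0 \<and> eqnF \<psi> \<kappa> = 0) \<longleftrightarrow> in_Q_infty_cond \<psi>)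
    \<and> (in_Q_infty_cond \<psi> \<longrightarrow>
        (\<exists>m1 m2 :: int. (m1, m2) \<noteq> (0, 0) \<and> gcd \<bar>m1\<bar> \<bar>m2\<bar> = 1
           \<and> cos \<psi> = sqrt 3 / 2 * of_int m1 / sqrt (of_int (m1^2 + m1*m2 + m2^2))
           \<and> sin \<psi> = 1 / 2 * of_int (m1 + 2*m2) / sqrt (of_int (m1^2 + m1*m2 + m2^2))
           \<and> {\<kappa>::real. eqnF \<psi> \<kappa> = 0}
               = {4 * of_int M * pi / sqrt 3 * sqrt (of_int (m1^2 + m1*m2 + m2^2)) | M :: int. True}))"
proof -
  have lattice: "\<exists>m1 m2 :: int. (m1, m2) \<noteq> (0, 0) \<and> gcd \<bar>m1\<bar> \<bar>m2\<bar> = 1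
           \<and> cos \<psi> = sqrt 3 / 2 * of_int m1 / sqrt (of_int (m1^2 + m1*m2 + m2^2))
           \<and> sin \<psi> = 1 / 2 * of_int (m1 + 2*m2) / sqrt (of_int (m1^2 + m1*m2 + m2^2))
           \<and> {\<kappa>::real. eqnF \<psi> \<kappa> = 0}
               = {4 * of_int M * pi / sqrt 3 * sqrt (of_int (m1^2 + m1*m2 + m2^2)) | M :: int. True}"
    if Q: "in_Q_infty_cond \<psi>"
    by (rule Q_infty_imp_solution_lattice[OF Q], intro exI conjI)
  have "\<exists>\<kappa>::real. \<kappa> \<noteq> 0 \<and> eqnF \<psi> \<kappa> = 0" if Q: "in_Q_infty_cond \<psi>"
  proof -
    obtain m1 m2 :: int where "(m1, m2) \<noteq> (0, 0)" and solutions: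
      "{\<kappa>. eqnF \<psi> \<kappa> = 0}
         = {4 * of_int M * pi / sqrt 3 * sqrt (of_int (m1^2 + m1*m2 + m2^2)) | M :: int. True}"
      using Q_infty_imp_solution_lattice[OF Q] by blast
    then show ?thesis using solution_lattice_nonzero_point[of m1 m2] by blast
  qed
  then show ?thesis using lattice nonzero_solution_imp_Q_infty by blast
qed

end
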